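(* In the finite-dimensional affine setting described in the context, for $\zeta\in A$ let $\hat{K}^{\mathrm{S}}_\zeta:C\to\mathbb{C}$ be $$\hat{K}^{\mathrm{S}}_\zeta(\varphi)=\exp\Big(\mathrm{i}\,\theta(\zeta,\varphi-c(\zeta))-\tfrac12\Omega(\varphi-c(\zeta),\varphi-c(\zeta))\Big).$$ Then the linear span of $\{\hat{K}^{\mathrm{S}}_\zeta:\zeta\in A\}$ is dense in $\mathrm{L}^2(C,\mu_C)$.
   Context: $A$ is a finite-dimensional real affine space over the vector space $L$. $\theta:A\times L\to\mathbb{R}$ is linear in its second argument and there is a bilinear form $[\cdot,\cdot]:L\times L\to\mathbb{R}$ with $\theta(\eta+\xi,\tau)=\theta(\eta,\tau)+[\xi,\tau]$ for all $\eta\in A$, $\xi,\tau\in L$; $\omega(\xi,\xi')=\frac12[\xi,\xi']-\frac12[\xi',\xi]$ is non-degenerate. $M=\{\tau\in L:[\xi,\tau]=0\ \forall\xi\in L\}$, $N=\{\tau\in L:[\tau,\xi]=0\ \forall\xi\in L\}$, $L=M\oplus N$ is assumed, $Q=L/M$ with quotient map $q$, and $\theta(\eta,\cdot)$ vanishes on $M$ so that $\theta$ is viewed as a map $A\times Q\to\mathbb{R}$. $C=A/M$ is an affine space over $Q$ with quotient map $c:A\to C$. $J:L\to L$ is linear with $J^2=-\mathrm{id}$, $\omega(J\cdot,J\cdot)=\omega$, and $g(\tau,\xi)=2\omega(\tau,J\xi)$ positive definite; $Q$ carries the quotient norm from $g$ and $j:Q\to L$ is the unique linear map with $q\circ j=\mathrm{id}_Q$,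 $j(Q)\subseteq JM$. $\Omega:Q\times Q\to\mathbb{C}$ is $\Omega(\phi,\phi')=g(j(\phi),j(\phi'))-\mathrm{i}[j(\phi),\phi']$. $\mu_C$ is the translation-invariant Lebesgue measure on $C$ normalized by $\int_C\exp(-g(j(\varphi-c(\eta)),j(\varphi-c(\eta))))\,\mathrm{d}\mu_C(\varphi)=1$ for some (equivalently any) $\eta\in A$. *)

theory Defs
  imports "HOL-Analysis.Analysis"
begin

text \<open>The affine space A over L is represented by L itself (after choosing
an origin); the quotient Q = L/M and the affine quotient C = A/M are both represented by a
finite-dimensional real vector space 'q together with a surjective linear map q : L \<rightarrow> 'q
whose kernel is M; the affine quotient map c is then q itself.\<close>

definition omega_of :: "('l::real_vector \<Rightarrow> 'l \<Rightarrow> real) \<Rightarrow> 'l \<Rightarrow> 'l \<Rightarrow> real" where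
  "omega_of br \<xi> \<xi>' = (1/2) * br \<xi> \<xi>' - (1/2) * br \<xi>' \<xi>"

definition g_of :: "('l::real_vector \<Rightarrow> 'l \<Rightarrow> real) \<Rightarrow> ('l \<Rightarrow> 'l) \<Rightarrow> 'l \<Rightarrow> 'l \<Rightarrow> real" where
  "g_of br J \<tau> \<xi> = 2 * omega_of br \<tau> (J \<xi>)"

definition Mker :: "('l::zero \<Rightarrow> 'l \<Rightarrow> real) \<Rightarrow> 'l set" where
  "Mker br = {\<tau>. \<forall>\<xi>. br \<xi> \<tau> = 0}"

definition Nker :: "('l::zero \<Rightarrow> 'l \<Rightarrow> real) \<Rightarrow> 'l set" where
  "Nker br = {\<tau>. \<forall>\<xi>. br \<tau> \<xi> = 0}"

text \<open>\<Omega>(\<phi>,\<phi>') = g(j \<phi>, j \<phi>') - i [j \<phi>, \<phi>'], where [j \<phi>, \<phi>'] := [j \<phi>, \<tau>] for any \<tau> with q \<tau> = \<phi>'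
  (well defined since [\<xi>, .] vanishes on M); we use the representative j \<phi>'.\<close>
definition Omega_of :: "('l::real_vector \<Rightarrow> 'l \<Rightarrow> real) \<Rightarrow> ('l \<Rightarrow> 'l) \<Rightarrow> ('q \<Rightarrow> 'l) \<Rightarrow> 'q \<Rightarrow> 'q \<Rightarrow> complex" where
  "Omega_of br J j \<phi> \<phi>' =
     complex_of_real (g_of br J (j \<phi>) (j \<phi>')) - \<i> * complex_of_real (br (j \<phi>) (j \<phi>'))"

text \<open>\<theta>(\<zeta>, \<psi>) for \<psi> \<in> Q is \<theta>(\<zeta>, \<tau>) for any representative \<tau> (well defined since \<theta>(\<zeta>,.)
  vanishes on M); we use the representative j \<psi>.\<close>
definition Khat :: "('l::real_vector \<Rightarrow> 'l \<Rightarrow> real) \<Rightarrow> ('l \<Rightarrow> 'l \<Rightarrow> real) \<Rightarrow> ('l \<Rightarrow> 'l) \<Rightarrow> ('l \<Rightarrow> 'q::real_vector)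
                      \<Rightarrow> ('q \<Rightarrow> 'l) \<Rightarrow> 'l \<Rightarrow> 'q \<Rightarrow> complex" where
  "Khat \<theta> br J q j \<zeta> \<phi> =
     exp (\<i> * complex_of_real (\<theta> \<zeta> (j (\<phi> - q \<zeta>)))
          - (1/2) * Omega_of br J j (\<phi> - q \<zeta>) (\<phi> - q \<zeta>))"

end

theory Submission
  imports Defs "HOL-Analysis.Analysis"
begin

text \<open>
  The span of the kernels is stable under multiplication by the characters
  \<phi> \<mapsto> exp (i k \<bullet> \<phi>) of C: translating \<zeta> by m \<in> M does not move c \<zeta> and multiplies the kernel
  by exp (i [m, j \<phi>]) up to a constant, and because L = M \<oplus> N and ker q = M every character of
  Q arises as [m, j -]. Hence the span contains E t for one fixed kernel E and every
  trigonometric polynomial t, and it suffices that these products are dense in L^2. The kernel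
  E is continuous, nowhere zero and, by the normalisation of \<mu>C, square integrable.
  An L^2 function is approximated by a bounded one of bounded support, that one by a continuous h
  of compact support, and h / E uniformly on a large cube by a trigonometric polynomial t, obtained
  from the Stone-Weierstrass theorem on the image of the cube under
  x \<mapsto> (cos (\<omega> x_b), sin (\<omega> x_b))_b, which glues opposite faces. Being periodic, t stays
  bounded off the cube, where |E|^2 has small integral.
\<close>

section \<open>Finite linear combinations of functions\<close>

definition fun_span :: "('i \<Rightarrow> 'a \<Rightarrow> complex) \<Rightarrow> ('a \<Rightarrow> complex) set" where
  "fun_span K = {v. \<exists>Z c. finite Z \<and> v = (\<lambda>x. \<Sum>i\<in>Z. c i * K i x)}"

lemma fun_spanE:
  assumes "v \<in> fun_span K"
  obtains Z c where "finite Z" "\<And>x. v x = (\<Sum>i\<in>Z. c i * K i x)"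
  using assms unfolding fun_span_def by auto

lemma fun_span_zero: "(\<lambda>x. 0) \<in> fun_span K"
  unfolding fun_span_def by (rule CollectI, rule exI[of _ "{}"]) simp

lemma fun_span_base: "(\<lambda>x. c * K i x) \<in> fun_span K"
  unfolding fun_span_def by (rule CollectI, rule exI[of _ "{i}"], rule exI[of _ "\<lambda>_. c"]) simp

lemma fun_span_add:
  assumes "u \<in> fun_span K" "v \<in> fun_span K"
  shows "(\<lambda>x. u x + v x) \<in> fun_span K"
proof -
  obtain Z c where Z: "finite Z" "\<And>x. u x = (\<Sum>i\<in>Z. c i * K i x)"
    using assms(1) by (auto elim: fun_spanE)
  obtain Z' c' where Z': "finite Z'" "\<And>x. v x = (\<Sum>i\<in>Z'. c' i * K i x)"
    using assms(2) by (auto elim: fun_spanE)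
  define d where "d i = (if i \<in> Z then c i else 0) + (if i \<in> Z' then c' i else 0)" for i
  have "u x + v x = (\<Sum>i\<in>Z \<union> Z'. d i * K i x)" for x
  proof -
    have "(\<Sum>i\<in>Z \<union> Z'. (if i \<in> Z then c i else 0) * K i x) = u x"
      unfolding Z(2) by (rule sum.mono_neutral_cong_right) (use Z Z' in auto)
    moreover have "(\<Sum>i\<in>Z \<union> Z'. (if i \<in> Z' then c' i else 0) * K i x) = v x"
      unfolding Z'(2) by (rule sum.mono_neutral_cong_right) (use Z Z' in auto)
    ultimately show ?thesis
      by (simp add: d_def distrib_right sum.distrib)
  qed
  then show ?thesis
    unfolding fun_span_def using Z(1) Z'(1) by blast
qed

lemma fun_span_sum:
  "finite I \<Longrightarrow> (\<And>i. i \<in> I \<Longrightarrow> f i \<in> fun_span K) \<Longrightarrow> (\<lambda>x. \<Sum>i\<in>I. f i x) \<in> fun_span K"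
  by (induction I rule: finite_induct) (auto intro: fun_span_add fun_span_zero)

lemma fun_span_cmult:
  assumes "v \<in> fun_span K"
  shows "(\<lambda>x. a * v x) \<in> fun_span K"
proof -
  obtain Z c where "finite Z" "\<And>x. v x = (\<Sum>i\<in>Z. c i * K i x)"
    using assms by (auto elim: fun_spanE)
  then show ?thesis
    unfolding fun_span_def
    by (intro CollectI exI[of _ Z] exI[of _ "\<lambda>i. a * c i"]) (simp add: sum_distrib_left mult.assoc)
qed

lemma fun_span_multiplier:
  assumes "\<And>i. (\<lambda>x. E x * K i x) \<in> fun_span K'" and "v \<in> fun_span K"
  shows "(\<lambda>x. E x * v x) \<in> fun_span K'"
proof -
  obtain Z c where Z: "finite Z" "\<And>x. v x = (\<Sum>i\<in>Z. c i * K i x)"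
    using assms(2) by (auto elim: fun_spanE)
  have "(\<lambda>x. \<Sum>i\<in>Z. c i * (E x * K i x)) \<in> fun_span K'"
    by (intro fun_span_sum fun_span_cmult assms(1) Z(1))
  then show ?thesis
    by (simp add: Z(2) sum_distrib_left mult.left_commute)
qed

lemma fun_span_mult:
  assumes closed: "\<And>i i'. \<exists>c i''. \<forall>x. K i x * K i' x = c * K i'' x"
    and "u \<in> fun_span K" "v \<in> fun_span K"
  shows "(\<lambda>x. u x * v x) \<in> fun_span K"
proof -
  have "(\<lambda>x. K i x * v x) \<in> fun_span K" for i
  proof (rule fun_span_multiplier[OF _ assms(3)])
    fix i'
    obtain c i'' where "\<forall>x. K i x * K i' x = c * K i'' x" using closed by blast
    then show "(\<lambda>x. K i x * K i' x) \<in> fun_span K" by (simp add: fun_span_base)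
  qed
  then have "(\<lambda>x. v x * K i x) \<in> fun_span K" for i
    by (simp add: mult.commute)
  from fun_span_multiplier[OF this assms(2)] show ?thesis
    by (simp add: mult.commute)
qed

section \<open>Trigonometric polynomials and the torus embedding\<close>

definition character :: "'a::real_inner \<Rightarrow> 'a \<Rightarrow> complex" where
  "character k x = exp (\<i> * of_real (k \<bullet> x))"

abbreviation trig_polys :: "('a::real_inner \<Rightarrow> complex) set" where
  "trig_polys \<equiv> fun_span character"

lemma character_mult: "character k x * character l x = character (k + l) x"
  by (simp add: character_def inner_add_left distrib_left exp_add)

lemma trig_polys_mult: "u \<in> trig_polys \<Longrightarrow> v \<in> trig_polys \<Longrightarrow> (\<lambda>x. u x * v x) \<in> trig_polys"
  by (rule fun_span_mult) (use character_mult in \<open>metis mult_1\<close>)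

lemma trig_polys_const: "(\<lambda>x. c) \<in> trig_polys"
  using fun_span_base[of c character 0] by (simp add: character_def)

lemma trig_polys_cos: "(\<lambda>x. complex_of_real (cos (\<omega> * (x \<bullet> b)))) \<in> trig_polys"
proof -
  have "complex_of_real (cos (\<omega> * (x \<bullet> b)))
      = 1/2 * character (\<omega> *\<^sub>R b) x + 1/2 * character (-\<omega> *\<^sub>R b) x" for x
    by (simp add: character_def cos_of_real[symmetric] cos_exp_eq inner_commute field_simps)
  then show ?thesis
    by (simp only:) (intro fun_span_add fun_span_base)
qed

lemma trig_polys_sin: "(\<lambda>x. complex_of_real (sin (\<omega> * (x \<bullet> b)))) \<in> trig_polys"
proof -
  have "complex_of_real (sin (\<omega> * (x \<bullet> b)))
      = 1/(2*\<i>) * character (\<omega> *\<^sub>R b) x - 1/(2*\<i>) * character (-\<omega> *\<^sub>R b) x" for x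
    by (simp add: character_def sin_of_real[symmetric] sin_exp_eq inner_commute field_simps)
  then show ?thesis
    by (simp only: diff_conv_add_uminus minus_mult_left) (intro fun_span_add fun_span_base)
qed

lemma continuous_on_trig_poly:
  assumes "t \<in> trig_polys"
  shows "continuous_on S t"
proof -
  obtain Z c where "\<And>x. t x = (\<Sum>k\<in>Z. c k * character k x)"
    using assms by (auto elim: fun_spanE)
  then have "t = (\<lambda>x. \<Sum>k\<in>Z. c k * character k x)"
    by blast
  then show ?thesis
    unfolding character_def by (simp only:) (intro continuous_intros)
qed

definition torus_embedding :: "real \<Rightarrow> 'a::euclidean_space \<Rightarrow> 'a \<times> 'a" where
  "torus_embedding \<omega> x = ((\<Sum>b\<in>Basis. cos (\<omega> * (x \<bullet> b)) *\<^sub>R b), (\<Sum>b\<in>Basis. sin (\<omega> * (x \<bullet> b)) *\<^sub>R b))"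

lemma continuous_on_torus_embedding: "continuous_on S (torus_embedding \<omega>)"
  unfolding torus_embedding_def by (intro continuous_intros)

lemma real_polynomial_torus_embedding:
  fixes r :: "'a::euclidean_space \<times> 'a \<Rightarrow> real"
  assumes "real_polynomial_function r"
  shows "(\<lambda>x. complex_of_real (r (torus_embedding \<omega> x))) \<in> trig_polys"
  using assms
proof induction
  case (linear f)
  then have f: "linear f" by (rule bounded_linear.linear)
  have emb: "torus_embedding \<omega> x
      = (\<Sum>b\<in>Basis. cos (\<omega> * (x \<bullet> b)) *\<^sub>R (b, 0) + sin (\<omega> * (x \<bullet> b)) *\<^sub>R (0, b))" for x :: 'a
    unfolding torus_embedding_def by (simp add: prod_eq_iff fst_sum snd_sum)
  have "f (torus_embedding \<omega> x)
      = (\<Sum>b\<in>Basis. f (b, 0) * cos (\<omega> * (x \<bullet> b)) + f (0, b) * sin (\<omega> * (x \<bullet> b)))" for x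
    unfolding emb linear_sum[OF f] linear_add[OF f] linear_scale[OF f] by (simp add: mult.commute)
  then have "complex_of_real (f (torus_embedding \<omega> x)) = (\<Sum>b\<in>Basis.
      of_real (f (b, 0)) * of_real (cos (\<omega> * (x \<bullet> b)))
      + of_real (f (0, b)) * of_real (sin (\<omega> * (x \<bullet> b))))" for x
    by simp
  then show ?case
    by (simp only:)
      (intro fun_span_sum finite_Basis fun_span_add fun_span_cmult trig_polys_cos trig_polys_sin)
qed (simp_all add: trig_polys_const trig_polys_mult fun_span_add)

lemma polynomial_torus_embedding:
  assumes "polynomial_function p"
  shows "(\<lambda>x. p (torus_embedding \<omega> x)) \<in> trig_polys"
proof -
  have "real_polynomial_function (Re \<circ> p)" "real_polynomial_function (Im \<circ> p)"
    using assms bounded_linear_Re bounded_linear_Im unfolding polynomial_function_def by blast+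
  then have "(\<lambda>x. of_real ((Re \<circ> p) (torus_embedding \<omega> x))
      + \<i> * of_real ((Im \<circ> p) (torus_embedding \<omega> x))) \<in> trig_polys"
    by (intro fun_span_add fun_span_cmult real_polynomial_torus_embedding)
  then show ?thesis
    by (simp add: complex_eq[symmetric])
qed

lemma torus_embedding_eq_iff:
  "torus_embedding \<omega> x = torus_embedding \<omega> y \<longleftrightarrow>
     (\<forall>b\<in>Basis. \<exists>n::int. \<omega> * (x \<bullet> b) = \<omega> * (y \<bullet> b) + 2 * pi * n)"
proof -
  have coord: "(\<Sum>b'\<in>Basis. f b' *\<^sub>R b') \<bullet> b = f b" if "b \<in> Basis" for f and b :: 'a
    using that by (simp add: inner_sum_left inner_Basis if_distrib cong: if_cong)
  have "torus_embedding \<omega> x = torus_embedding \<omega> y \<longleftrightarrow> (\<forall>b\<in>Basis.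
      sin (\<omega> * (x \<bullet> b)) = sin (\<omega> * (y \<bullet> b)) \<and> cos (\<omega> * (x \<bullet> b)) = cos (\<omega> * (y \<bullet> b)))"
    unfolding torus_embedding_def prod_eq_iff fst_conv snd_conv euclidean_eq_iff[where 'a='a]
    by (auto simp: coord)
  then show ?thesis
    by (simp add: sin_cos_eq_iff)
qed

definition cube :: "real \<Rightarrow> 'a::euclidean_space set" where
  "cube P = cbox (- (P *\<^sub>R One)) (P *\<^sub>R One)"

lemma mem_cube: "x \<in> cube P \<longleftrightarrow> (\<forall>b\<in>Basis. \<bar>x \<bullet> b\<bar> \<le> P)"
  by (auto simp: cube_def mem_box abs_le_iff)

lemma compact_cube: "compact (cube P)"
  by (simp add: cube_def)

lemma norm_le_imp_mem_cube: "norm x \<le> P \<Longrightarrow> x \<in> cube P"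
  unfolding mem_cube using Basis_le_norm order_trans by blast

lemma torus_embedding_fiber_in_cube:
  assumes P: "P > 0" and "x \<in> cube P" "y \<in> cube P" "x \<noteq> y"
    and eq: "torus_embedding (pi / P) x = torus_embedding (pi / P) y"
  shows "\<exists>b\<in>Basis. \<bar>x \<bullet> b\<bar> = P \<and> \<bar>y \<bullet> b\<bar> = P"
proof -
  obtain b where b: "b \<in> Basis" "x \<bullet> b \<noteq> y \<bullet> b"
    using \<open>x \<noteq> y\<close> euclidean_eqI by blast
  then obtain n :: int where "pi / P * (x \<bullet> b) = pi / P * (y \<bullet> b) + 2 * pi * n"
    using eq by (auto simp: torus_embedding_eq_iff)
  then have "pi * (x \<bullet> b - y \<bullet> b) = pi * (2 * P * n)"
    using P by (simp add: field_simps)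
  then have n: "x \<bullet> b - y \<bullet> b = 2 * P * n"
    by simp
  have bounds: "\<bar>x \<bullet> b\<bar> \<le> P" "\<bar>y \<bullet> b\<bar> \<le> P"
    using assms(2,3) b(1) by (auto simp: mem_cube)
  then have "P * \<bar>n\<bar> \<le> P * 1"
    using n by (simp add: abs_mult)
  then have "\<bar>n\<bar> \<le> 1"
    using P by (simp only: mult_le_cancel_left_pos)
  moreover have "n \<noteq> 0"
    using n b(2) by auto
  ultimately have "n = 1 \<or> n = -1"
    by auto
  then have "x \<bullet> b = P \<and> y \<bullet> b = -P \<or> x \<bullet> b = -P \<and> y \<bullet> b = P"
    using n bounds unfolding abs_le_iff by (elim disjE) simp_all
  then have "\<bar>x \<bullet> b\<bar> = P \<and> \<bar>y \<bullet> b\<bar> = P"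
    using P by auto
  then show ?thesis
    using b(1) by blast
qed

lemma torus_embedding_image_cube:
  assumes P: "P > 0"
  shows "\<exists>y\<in>cube P. torus_embedding (pi / P) y = torus_embedding (pi / P) x"
proof -
  define k where "k b = round ((x \<bullet> b) / (2 * P))" for b
  define y where "y = (\<Sum>b\<in>Basis. (x \<bullet> b - 2 * P * k b) *\<^sub>R b)"
  have y: "y \<bullet> b = x \<bullet> b - 2 * P * k b" if "b \<in> Basis" for b
    using that by (simp add: y_def inner_sum_left inner_Basis if_distrib cong: if_cong)
  have "\<bar>x \<bullet> b - 2 * P * k b\<bar> \<le> P" for b
  proof -
    have "\<bar>x \<bullet> b - 2 * P * k b\<bar> = 2 * P * \<bar>(x \<bullet> b) / (2 * P) - k b\<bar>"
      using P by (simp add: abs_mult[symmetric] field_simps)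
    also have "\<dots> \<le> 2 * P * (1/2)"
      using P of_int_round_abs_le[of "(x \<bullet> b) / (2 * P)"]
      by (intro mult_left_mono) (auto simp: k_def abs_minus_commute)
    finally show ?thesis by simp
  qed
  then have "y \<in> cube P"
    by (simp add: mem_cube y)
  moreover have "torus_embedding (pi / P) y = torus_embedding (pi / P) x"
    unfolding torus_embedding_eq_iff
  proof
    fix b :: 'a
    assume "b \<in> Basis"
    then have "pi / P * (y \<bullet> b) = pi / P * (x \<bullet> b) + 2 * pi * of_int (- k b)"
      using P by (simp add: y field_simps)
    then show "\<exists>n::int. pi / P * (y \<bullet> b) = pi / P * (x \<bullet> b) + 2 * pi * n" ..
  qed
  ultimately show ?thesis
    by blast
qed

lemma continuous_on_factor_compact:
  fixes \<Phi> :: "'a::topological_space \<Rightarrow> 'b::metric_space" and u :: "'a \<Rightarrow> 'c::topological_space"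
  assumes S: "compact S" and \<Phi>: "continuous_on S \<Phi>" and u: "continuous_on S u"
    and fibers: "\<And>x y. x \<in> S \<Longrightarrow> y \<in> S \<Longrightarrow> \<Phi> x = \<Phi> y \<Longrightarrow> u x = u y"
  obtains v where "continuous_on (\<Phi> ` S) v" "\<And>x. x \<in> S \<Longrightarrow> v (\<Phi> x) = u x"
proof
  define v where "v = u \<circ> inv_into S \<Phi>"
  show v: "v (\<Phi> x) = u x" if "x \<in> S" for x
    unfolding v_def o_def using that by (intro fibers inv_into_into f_inv_into_f) auto
  have quotient: "quotient_map (top_of_set S) (top_of_set (\<Phi> ` S)) \<Phi>"
    by (rule continuous_imp_quotient_map)
      (use S \<Phi> compact_continuous_image[OF \<Phi> S] in
        \<open>auto simp: compact_space_def Hausdorff_space_subtopology continuous_map_in_subtopology\<close>)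
  have "continuous_on S (v \<circ> \<Phi>)"
    using continuous_on_eq[OF u] v by auto
  then have "continuous_map (top_of_set (\<Phi> ` S)) euclidean v"
    by (intro continuous_compose_quotient_map[OF quotient]) simp
  then show "continuous_on (\<Phi> ` S) v"
    by simp
qed

lemma trig_polys_approx_on_cube:
  fixes u :: "'a::euclidean_space \<Rightarrow> complex"
  assumes u: "continuous_on (cube P) u" and P: "P > 0" and \<delta>: "\<delta> > 0"
    and boundary: "\<And>x b. x \<in> cube P \<Longrightarrow> b \<in> Basis \<Longrightarrow> \<bar>x \<bullet> b\<bar> = P \<Longrightarrow> u x = 0"
  obtains t where "t \<in> trig_polys" "\<And>x. x \<in> cube P \<Longrightarrow> cmod (u x - t x) < \<delta>"
    "\<And>x. \<exists>y\<in>cube P. t x = t y"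
proof -
  define \<Phi> where "\<Phi> = (torus_embedding (pi / P) :: 'a \<Rightarrow> 'a \<times> 'a)"
  \<comment> \<open>\<Phi> identifies only points on opposite faces of the cube, where u vanishes, so u factors
    through the compact set \<Phi> ` cube P, on which Stone-Weierstrass applies.\<close>
  have fibers: "u x = u y" if xy: "x \<in> cube P" "y \<in> cube P" "\<Phi> x = \<Phi> y" for x y
  proof (cases "x = y")
    case False
    then obtain b where "b \<in> Basis" "\<bar>x \<bullet> b\<bar> = P" "\<bar>y \<bullet> b\<bar> = P"
      using torus_embedding_fiber_in_cube[OF P xy(1,2)] xy(3) unfolding \<Phi>_def by blast
    then show ?thesis
      using boundary xy(1,2) by metis
  qed simp
  obtain v where v: "continuous_on (\<Phi> ` cube P) v" "\<And>x. x \<in> cube P \<Longrightarrow> v (\<Phi> x) = u x"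
    using continuous_on_factor_compact[OF compact_cube continuous_on_torus_embedding u
        fibers[unfolded \<Phi>_def]]
    unfolding \<Phi>_def by auto
  obtain p where p: "polynomial_function p" "\<And>z. z \<in> \<Phi> ` cube P \<Longrightarrow> norm (v z - p z) < \<delta>"
    using Stone_Weierstrass_polynomial_function[OF compact_continuous_image[OF _ compact_cube] v(1) \<delta>]
      continuous_on_torus_embedding unfolding \<Phi>_def by metis
  show ?thesis
  proof
    show "(\<lambda>x. p (\<Phi> x)) \<in> trig_polys"
      unfolding \<Phi>_def by (rule polynomial_torus_embedding[OF p(1)])
    show "cmod (u x - p (\<Phi> x)) < \<delta>" if "x \<in> cube P" for x
      using p(2)[of "\<Phi> x"] v(2) that by auto
    show "\<exists>y\<in>cube P. p (\<Phi> x) = p (\<Phi> y)" for x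
      using torus_embedding_image_cube[OF P, of x] unfolding \<Phi>_def by (metis (no_types))
  qed
qed

section \<open>Approximation in L^2\<close>

definition sqdist_L2 :: "'a measure \<Rightarrow> ('a \<Rightarrow> complex) \<Rightarrow> ('a \<Rightarrow> complex) \<Rightarrow> ennreal" where
  "sqdist_L2 M f g = (\<integral>\<^sup>+x. ennreal ((cmod (f x - g x))\<^sup>2) \<partial>M)"

lemma sqdist_L2_triangle:
  assumes [measurable]: "f \<in> borel_measurable M" "g \<in> borel_measurable M" "h \<in> borel_measurable M"
  shows "sqdist_L2 M f h \<le> 2 * sqdist_L2 M f g + 2 * sqdist_L2 M g h"
proof -
  have "(cmod (a - c))\<^sup>2 \<le> 2 * (cmod (a - b))\<^sup>2 + 2 * (cmod (b - c))\<^sup>2" for a b c :: complex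
  proof -
    have "cmod (a - c) \<le> cmod (a - b) + cmod (b - c)"
      using norm_triangle_ineq[of "a - b" "b - c"] by simp
    then have "(cmod (a - c))\<^sup>2 \<le> (cmod (a - b) + cmod (b - c))\<^sup>2"
      by (simp add: power_mono)
    also have "\<dots> \<le> 2 * (cmod (a - b))\<^sup>2 + 2 * (cmod (b - c))\<^sup>2"
      unfolding power2_sum using sum_squares_bound[of "cmod (a - b)" "cmod (b - c)"] by linarith
    finally show ?thesis .
  qed
  then have "ennreal ((cmod (a - c))\<^sup>2) \<le> ennreal (2 * (cmod (a - b))\<^sup>2 + 2 * (cmod (b - c))\<^sup>2)"
    for a b c :: complex
    by (intro ennreal_leI)
  also have "ennreal (2 * x + 2 * y) = 2 * ennreal x + 2 * ennreal y" if "x \<ge> 0" "y \<ge> 0" for x y :: real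
    using that by (simp add: ennreal_mult)
  finally have pointwise:
    "ennreal ((cmod (a - c))\<^sup>2) \<le> 2 * ennreal ((cmod (a - b))\<^sup>2) + 2 * ennreal ((cmod (b - c))\<^sup>2)"
    for a b c :: complex
    by simp
  then have "sqdist_L2 M f h
      \<le> (\<integral>\<^sup>+x. 2 * ennreal ((cmod (f x - g x))\<^sup>2) + 2 * ennreal ((cmod (g x - h x))\<^sup>2) \<partial>M)"
    unfolding sqdist_L2_def by (intro nn_integral_mono pointwise)
  also have "\<dots> = 2 * sqdist_L2 M f g + 2 * sqdist_L2 M g h"
    unfolding sqdist_L2_def by (subst nn_integral_add) (measurable, simp add: nn_integral_cmult)
  finally show ?thesis .
qed

lemma sqdist_L2_triangle_less:
  assumes "f \<in> borel_measurable M" "g \<in> borel_measurable M" "h \<in> borel_measurable M"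
    and fg: "sqdist_L2 M f g < ennreal a" and gh: "sqdist_L2 M g h < ennreal b"
  shows "sqdist_L2 M f h < ennreal (2 * a + 2 * b)"
proof -
  have "sqdist_L2 M f h \<le> (sqdist_L2 M f g + sqdist_L2 M f g) + (sqdist_L2 M g h + sqdist_L2 M g h)"
    using sqdist_L2_triangle[OF assms(1-3)] unfolding mult_2 .
  also have "\<dots> < ennreal ((a + a) + (b + b))"
    by (intro add_mono_ennreal fg gh)
  also have "(a + a) + (b + b) = 2 * a + 2 * b"
    by simp
  finally show ?thesis .
qed

lemma eventually_nn_integral_less:
  assumes [measurable]: "\<And>n. u n \<in> borel_measurable M" "w \<in> borel_measurable M"
    and "\<And>n. AE x in M. u n x \<le> w x" "(\<integral>\<^sup>+x. w x \<partial>M) < \<infinity>"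
    and "AE x in M. (\<lambda>n. u n x) \<longlonglongrightarrow> 0" and "e > 0"
  shows "\<forall>\<^sub>F n in sequentially. (\<integral>\<^sup>+x. u n x \<partial>M) < e"
proof -
  have "(\<lambda>n. \<integral>\<^sup>+x. u n x \<partial>M) \<longlonglongrightarrow> (\<integral>\<^sup>+x. 0 \<partial>M)"
    by (rule nn_integral_dominated_convergence[OF assms(1) _ assms(2-5)]) simp
  then show ?thesis
    using \<open>e > 0\<close> by (simp add: order_tendstoD(2))
qed

lemma sqdist_L2_truncation:
  fixes f :: "'a::real_normed_vector \<Rightarrow> complex"
  assumes [measurable_cong]: "sets M = sets borel"
    and [measurable]: "f \<in> borel_measurable M"
    and f: "(\<integral>\<^sup>+x. ennreal ((cmod (f x))\<^sup>2) \<partial>M) < \<infinity>" and "e > 0"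
  obtains R where "R > 0"
    "sqdist_L2 M f (\<lambda>x. if cmod (f x) \<le> R \<and> norm x \<le> R then f x else 0) < ennreal e"
proof -
  define u where
    "u n x = ennreal ((cmod (f x - (if cmod (f x) \<le> real n + 1 \<and> norm x \<le> real n + 1 then f x else 0)))\<^sup>2)"
    for n :: nat and x
  have "\<forall>\<^sub>F n in sequentially. (\<integral>\<^sup>+x. u n x \<partial>M) < ennreal e"
  proof (rule eventually_nn_integral_less[OF _ _ _ f])
    show "u n \<in> borel_measurable M" for n
      unfolding u_def by measurable
    show "AE x in M. u n x \<le> ennreal ((cmod (f x))\<^sup>2)" for n
      by (auto simp: u_def)
    show "AE x in M. (\<lambda>n. u n x) \<longlonglongrightarrow> 0"
    proof (rule AE_I2)
      fix x
      obtain N :: nat where "max (cmod (f x)) (norm x) \<le> real N"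
        using real_arch_simple by blast
      then have "\<forall>n\<ge>N. u n x = 0"
        by (auto simp: u_def)
      then show "(\<lambda>n. u n x) \<longlonglongrightarrow> 0"
        by (intro tendsto_eventually) (auto simp: eventually_sequentially)
    qed
  qed (use \<open>e > 0\<close> in simp_all)
  then obtain n where "(\<integral>\<^sup>+x. u n x \<partial>M) < ennreal e"
    by (auto simp: eventually_sequentially)
  then show ?thesis
    by (intro that[of "real n + 1"]) (auto simp: u_def sqdist_L2_def)
qed

definition radial_clip :: "real \<Rightarrow> complex \<Rightarrow> complex" where
  "radial_clip K z = z * of_real (K / max K (cmod z))"

lemma continuous_on_radial_clip: "K > 0 \<Longrightarrow> continuous_on S (radial_clip K)"
  unfolding radial_clip_def by (intro continuous_intros) auto

lemma radial_clip_id: "cmod z \<le> K \<Longrightarrow> radial_clip K z = z"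
  by (cases "K = 0") (auto simp: radial_clip_def max_def)

lemma norm_radial_clip_le:
  assumes "K > 0"
  shows "cmod (radial_clip K z) \<le> K"
proof -
  have "\<bar>K / max K (cmod z)\<bar> = K / max K (cmod z)"
    using assms by simp
  then have "cmod (radial_clip K z) = cmod z * (K / max K (cmod z))"
    unfolding radial_clip_def norm_mult norm_of_real by simp
  also have "\<dots> \<le> K"
    using assms by (cases "cmod z \<le> K") (simp_all add: max_def)
  finally show ?thesis .
qed

lemma AE_limit_of_continuous:
  fixes f :: "'a::euclidean_space \<Rightarrow> 'b::euclidean_space"
  assumes [measurable_cong]: "sets M = sets borel" and ac: "absolutely_continuous lborel M"
    and [measurable]: "f \<in> borel_measurable M"
  obtains g where "\<And>n. continuous_on UNIV (g n)" "AE x in M. (\<lambda>n. g n x) \<longlonglongrightarrow> f x"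
proof -
  have "f \<in> borel_measurable lebesgue"
    by (intro measurable_completion) simp
  then have "f measurable_on UNIV"
    by (rule lebesgue_measurable_imp_measurable_on) simp
  then obtain N g where N: "negligible N" and g: "\<And>n. continuous_on UNIV (g n)"
    and g_lim: "\<And>x. x \<notin> N \<Longrightarrow> (\<lambda>n. g n x) \<longlonglongrightarrow> f x"
    unfolding measurable_on_def by auto
  have "AE x in lebesgue. x \<notin> N"
    using N by (intro AE_not_in) (simp add: negligible_iff_null_sets)
  then have "AE x in lborel. x \<notin> N"
    by (simp add: AE_completion_iff)
  with absolutely_continuous_AE[OF _ ac] have "AE x in M. x \<notin> N"
    using assms(1) by simp
  then have "AE x in M. (\<lambda>n. g n x) \<longlonglongrightarrow> f x"
    by eventually_elim (rule g_lim)
  with g show ?thesis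
    by (rule that)
qed

lemma eventually_sqdist_L2_less_bounded:
  fixes f :: "'a::real_normed_vector \<Rightarrow> complex"
  assumes [measurable_cong]: "sets M = sets borel" and finite: "emeasure M (cball 0 r) < \<infinity>"
    and [measurable]: "f \<in> borel_measurable M" "\<And>n. h n \<in> borel_measurable M"
    and bounded: "\<And>x. cmod (f x) \<le> K" "\<And>n x. cmod (h n x) \<le> K"
    and support: "\<And>x. norm x > r \<Longrightarrow> f x = 0" "\<And>n x. norm x > r \<Longrightarrow> h n x = 0"
    and lim: "AE x in M. (\<lambda>n. h n x) \<longlonglongrightarrow> f x" and "e > 0"
  shows "\<forall>\<^sub>F n in sequentially. sqdist_L2 M f (h n) < e"
  unfolding sqdist_L2_def
proof (rule eventually_nn_integral_less[where w = "\<lambda>x. ennreal ((2 * K)\<^sup>2) * indicator (cball 0 r) x"])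
  have [measurable]: "cball (0::'a) r \<in> sets borel"
    by simp
  show "(\<lambda>x. ennreal ((cmod (f x - h n x))\<^sup>2)) \<in> borel_measurable M" for n
    by measurable
  show "(\<lambda>x. ennreal ((2 * K)\<^sup>2) * indicator (cball 0 r) x) \<in> borel_measurable M"
    by measurable
  show "(\<integral>\<^sup>+x. ennreal ((2 * K)\<^sup>2) * indicator (cball 0 r) x \<partial>M) < \<infinity>"
    using finite by (simp add: nn_integral_cmult_indicator ennreal_mult_less_top)
  show "AE x in M. ennreal ((cmod (f x - h n x))\<^sup>2) \<le> ennreal ((2 * K)\<^sup>2) * indicator (cball 0 r) x" for n
  proof (rule AE_I2)
    fix x
    have "cmod (f x - h n x) \<le> 2 * K"
      using bounded(1)[of x] bounded(2)[of n x] norm_triangle_ineq4[of "f x" "h n x"] by simp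
    then have "(cmod (f x - h n x))\<^sup>2 \<le> (2 * K)\<^sup>2"
      by (rule power_mono) simp
    then show "ennreal ((cmod (f x - h n x))\<^sup>2) \<le> ennreal ((2 * K)\<^sup>2) * indicator (cball 0 r) x"
      using support[of x] by (cases "norm x > r") (simp_all add: ennreal_leI)
  qed
  show "AE x in M. (\<lambda>n. ennreal ((cmod (f x - h n x))\<^sup>2)) \<longlonglongrightarrow> 0"
    using lim
  proof eventually_elim
    case (elim x)
    then have "(\<lambda>n. (cmod (f x - h n x))\<^sup>2) \<longlonglongrightarrow> (cmod (f x - f x))\<^sup>2"
      by (intro tendsto_intros)
    then have "(\<lambda>n. ennreal ((cmod (f x - h n x))\<^sup>2)) \<longlonglongrightarrow> ennreal 0"
      by (intro tendsto_ennrealI) simp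
    then show ?case
      by simp
  qed
qed (use \<open>e > 0\<close> in simp)

lemma sqdist_L2_continuous_approx:
  fixes f :: "'a::euclidean_space \<Rightarrow> complex"
  assumes [measurable_cong]: "sets M = sets borel"
    and ac: "absolutely_continuous lborel M" and finite: "\<And>r. emeasure M (cball 0 r) < \<infinity>"
    and [measurable]: "f \<in> borel_measurable M"
    and K: "K > 0" and bounded: "\<And>x. cmod (f x) \<le> K" and support: "\<And>x. norm x > R \<Longrightarrow> f x = 0"
    and "e > 0"
  obtains h where "continuous_on UNIV h" "\<And>x. norm x > R + 1 \<Longrightarrow> h x = 0" "sqdist_L2 M f h < ennreal e"
proof -
  obtain g where g: "\<And>n. continuous_on UNIV (g n)" and g_lim: "AE x in M. (\<lambda>n. g n x) \<longlonglongrightarrow> f x"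
    using AE_limit_of_continuous[OF assms(1) ac assms(4)] by blast
  define cutoff where "cutoff x = max 0 (min 1 (R + 1 - norm x))" for x :: 'a
  define h where "h n x = of_real (cutoff x) * radial_clip K (g n x)" for n x
  have h_cont: "continuous_on UNIV (h n)" for n
    unfolding h_def cutoff_def
    by (intro continuous_intros continuous_on_compose2[OF continuous_on_radial_clip[OF K] g]) auto
  have h_support: "norm x > R + 1 \<Longrightarrow> h n x = 0" for n x
    by (simp add: h_def cutoff_def)
  have h_bounded: "cmod (h n x) \<le> K" for n x
    using mult_mono[OF _ norm_radial_clip_le[OF K], of "cmod (cutoff x)" 1]
    unfolding h_def norm_mult by (simp add: cutoff_def)
  have h_lim: "AE x in M. (\<lambda>n. h n x) \<longlonglongrightarrow> f x"
    using g_lim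
  proof eventually_elim
    case (elim x)
    have "isCont (radial_clip K) (f x)"
      using continuous_on_radial_clip[OF K, of UNIV] by (simp add: continuous_on_eq_continuous_at)
    then have "(\<lambda>n. radial_clip K (g n x)) \<longlonglongrightarrow> radial_clip K (f x)"
      using elim by (rule isCont_tendsto_compose)
    then have "(\<lambda>n. h n x) \<longlonglongrightarrow> of_real (cutoff x) * f x"
      unfolding h_def radial_clip_id[OF bounded] by (intro tendsto_intros)
    moreover have "of_real (cutoff x) * f x = f x"
      using support[of x] by (cases "norm x > R") (auto simp: cutoff_def)
    ultimately show ?case
      by simp
  qed
  have h_meas: "h n \<in> borel_measurable M" for n
    using borel_measurable_continuous_onI[OF h_cont] by simp
  have f_support: "norm x > R + 1 \<Longrightarrow> f x = 0" for x
    using support by simp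
  have "\<forall>\<^sub>F n in sequentially. sqdist_L2 M f (h n) < ennreal e"
    using \<open>e > 0\<close>
    by (intro eventually_sqdist_L2_less_bounded[where h = h and r = "R + 1",
          OF assms(1) finite assms(4) h_meas bounded h_bounded f_support h_support h_lim]) auto
  then obtain n where "sqdist_L2 M f (h n) < ennreal e"
    by (auto simp: eventually_sequentially)
  with h_cont h_support show ?thesis
    by (rule that)
qed

lemma trig_polys_approx_bounded:
  fixes u :: "'a::euclidean_space \<Rightarrow> complex"
  assumes u: "continuous_on UNIV u" and bounded: "\<And>x. cmod (u x) \<le> B"
    and support: "\<And>x. norm x > R \<Longrightarrow> u x = 0" and P: "R < P" "0 < P" and \<delta>: "0 < \<delta>" "\<delta> \<le> 1"
  obtains t where "t \<in> trig_polys" "\<And>x. x \<in> cube P \<Longrightarrow> cmod (u x - t x) < \<delta>"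
    "\<And>x. cmod (u x - t x) \<le> B + 1"
proof -
  have "u x = 0" if "b \<in> Basis" "\<bar>x \<bullet> b\<bar> = P" for x b
    using support Basis_le_norm[OF that(1), of x] that(2) P(1) by simp
  then obtain t where t: "t \<in> trig_polys" "\<And>x. x \<in> cube P \<Longrightarrow> cmod (u x - t x) < \<delta>"
    "\<And>x. \<exists>y\<in>cube P. t x = t y"
    using trig_polys_approx_on_cube[OF continuous_on_subset[OF u] P(2) \<delta>(1)] by blast
  have "cmod (u x - t x) \<le> B + 1" for x
  proof (cases "x \<in> cube P")
    case True
    then show ?thesis
      using t(2)[of x] bounded[of x] \<delta>(2) norm_ge_zero[of "u x"] by linarith
  next
    case False
    then obtain b where "b \<in> Basis" "\<bar>x \<bullet> b\<bar> > P"
      by (auto simp: mem_cube not_le)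
    then have "u x = 0"
      using support Basis_le_norm[of b x] P(1) by simp
    obtain y where "y \<in> cube P" "t x = t y"
      using t(3) by blast
    then have "cmod (t x) \<le> cmod (u y) + cmod (u y - t y)"
      using norm_triangle_ineq4[of "u y" "u y - t y"] by simp
    then show ?thesis
      using \<open>u x = 0\<close> bounded[of y] t(2)[OF \<open>y \<in> cube P\<close>] \<delta>(2) by simp
  qed
  with t(1,2) show ?thesis
    by (rule that)
qed

lemma bounded_norm_compact_support:
  fixes u :: "'a::{heine_borel,real_normed_vector} \<Rightarrow> 'b::real_normed_vector"
  assumes u: "continuous_on UNIV u" and support: "\<And>x. norm x > R \<Longrightarrow> u x = 0"
  obtains B where "B \<ge> 0" "\<And>x. norm (u x) \<le> B"
proof -
  have "bounded (u ` cball 0 R)"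
    by (intro compact_imp_bounded compact_continuous_image continuous_on_subset[OF u]) auto
  then obtain B where B: "\<And>y. y \<in> u ` cball 0 R \<Longrightarrow> norm y \<le> B"
    unfolding bounded_iff by blast
  have "norm (u x) \<le> max B 0" for x
  proof (cases "norm x \<le> R")
    case True
    then show ?thesis
      using B[of "u x"] by (simp add: le_max_iff_disj)
  qed (simp add: support)
  then show ?thesis
    by (intro that[of "max B 0"]) auto
qed

lemma eventually_nn_integral_outside_cube_less:
  fixes G :: "'a::euclidean_space \<Rightarrow> ennreal"
  assumes [measurable_cong]: "sets M = sets borel" and [measurable]: "G \<in> borel_measurable M"
    and G: "(\<integral>\<^sup>+x. G x \<partial>M) < \<infinity>" and "e > 0"
  shows "\<forall>\<^sub>F n in sequentially. (\<integral>\<^sup>+x. G x * indicator (- cube (real n)) x \<partial>M) < e"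
proof (rule eventually_nn_integral_less[OF _ _ _ G _ \<open>e > 0\<close>])
  have [measurable]: "cube P \<in> sets borel" for P :: real
    by (simp add: cube_def)
  show "(\<lambda>x. G x * indicator (- cube (real n)) x) \<in> borel_measurable M" for n
    by measurable
  show "AE x in M. (\<lambda>n. G x * indicator (- cube (real n)) x) \<longlonglongrightarrow> 0"
  proof (rule AE_I2)
    fix x :: 'a
    obtain N :: nat where "norm x \<le> real N"
      using real_arch_simple by blast
    then have "\<forall>n\<ge>N. G x * indicator (- cube (real n)) x = 0"
      using norm_le_imp_mem_cube[of x] by (auto simp: indicator_def)
    then show "(\<lambda>n. G x * indicator (- cube (real n)) x) \<longlonglongrightarrow> 0"
      by (intro tendsto_eventually) (auto simp: eventually_sequentially)
  qed
qed (auto simp: indicator_def)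

lemma sqdist_L2_multiple_le:
  assumes [measurable_cong]: "sets M = sets borel"
    and [measurable]: "E \<in> borel_measurable M" "S \<in> sets borel"
    and on_S: "\<And>x. x \<in> S \<Longrightarrow> cmod (u x - t x) \<le> \<delta>" and everywhere: "\<And>x. cmod (u x - t x) \<le> C"
  shows "sqdist_L2 M (\<lambda>x. E x * u x) (\<lambda>x. E x * t x)
    \<le> ennreal (\<delta>\<^sup>2) * (\<integral>\<^sup>+x. ennreal ((cmod (E x))\<^sup>2) \<partial>M)
      + ennreal (C\<^sup>2) * (\<integral>\<^sup>+x. ennreal ((cmod (E x))\<^sup>2) * indicator (- S) x \<partial>M)"
proof -
  define G where "G x = ennreal ((cmod (E x))\<^sup>2)" for x
  have pointwise: "ennreal ((cmod (E x * u x - E x * t x))\<^sup>2)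
      \<le> ennreal (\<delta>\<^sup>2) * G x + ennreal (C\<^sup>2) * (G x * indicator (- S) x)" for x
  proof -
    have eq: "(cmod (E x * u x - E x * t x))\<^sup>2 = (cmod (u x - t x))\<^sup>2 * (cmod (E x))\<^sup>2"
      by (simp add: right_diff_distrib[symmetric] norm_mult power_mult_distrib)
    show ?thesis
    proof (cases "x \<in> S")
      case True
      then have "(cmod (u x - t x))\<^sup>2 \<le> \<delta>\<^sup>2"
        using on_S[of x] by (intro power_mono) auto
      then show ?thesis
        using True unfolding eq G_def by (simp add: ennreal_mult'[symmetric] ennreal_leI mult_right_mono)
    next
      case False
      have "(cmod (u x - t x))\<^sup>2 \<le> C\<^sup>2"
        using everywhere[of x] by (intro power_mono) auto
      then show ?thesis
        using False unfolding eq G_def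
        by (simp add: ennreal_mult'[symmetric] ennreal_leI mult_right_mono add_increasing)
    qed
  qed
  have [measurable]: "G \<in> borel_measurable M"
    unfolding G_def by measurable
  have "sqdist_L2 M (\<lambda>x. E x * u x) (\<lambda>x. E x * t x)
      \<le> (\<integral>\<^sup>+x. ennreal (\<delta>\<^sup>2) * G x + ennreal (C\<^sup>2) * (G x * indicator (- S) x) \<partial>M)"
    unfolding sqdist_L2_def by (intro nn_integral_mono pointwise)
  also have "\<dots> = ennreal (\<delta>\<^sup>2) * (\<integral>\<^sup>+x. G x \<partial>M) + ennreal (C\<^sup>2) * (\<integral>\<^sup>+x. G x * indicator (- S) x \<partial>M)"
    by (subst nn_integral_add) (measurable, simp add: nn_integral_cmult)
  finally show ?thesis
    unfolding G_def .
qed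

lemma exists_small_square_mult_le:
  fixes I e :: real
  assumes "0 \<le> I" "0 < e"
  obtains \<delta> where "0 < \<delta>" "\<delta> \<le> 1" "\<delta>\<^sup>2 * I \<le> e"
proof
  define \<delta> where "\<delta> = min 1 (sqrt (e / (I + 1)))"
  show "0 < \<delta>" "\<delta> \<le> 1"
    using assms by (auto simp: \<delta>_def)
  have "\<delta>\<^sup>2 \<le> (sqrt (e / (I + 1)))\<^sup>2"
    using \<open>0 < \<delta>\<close> by (intro power_mono) (auto simp: \<delta>_def)
  then have "\<delta>\<^sup>2 * I \<le> e / (I + 1) * I"
    using assms by (intro mult_right_mono) auto
  also have "\<dots> \<le> e"
    using assms by (simp add: field_simps)
  finally show "\<delta>\<^sup>2 * I \<le> e" .
qed

lemma sqdist_L2_trig_multiple_approx: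
  fixes h E :: "'a::euclidean_space \<Rightarrow> complex"
  assumes [measurable_cong]: "sets M = sets borel"
    and h: "continuous_on UNIV h" and support: "\<And>x. norm x > R \<Longrightarrow> h x = 0"
    and E: "continuous_on UNIV E" and E_nonzero: "\<And>x. E x \<noteq> 0"
    and E_L2: "(\<integral>\<^sup>+x. ennreal ((cmod (E x))\<^sup>2) \<partial>M) < \<infinity>"
    and e: "e > 0"
  obtains t where "t \<in> trig_polys" "sqdist_L2 M h (\<lambda>x. E x * t x) < ennreal e"
proof -
  \<comment> \<open>Approximate h / E on a large cube; off the cube the periodic approximant stays bounded, so
    the error there is controlled by the tail of |E|^2.\<close>
  define u where "u x = h x / E x" for x
  have u: "continuous_on UNIV u"
    unfolding u_def using h E E_nonzero by (intro continuous_intros) auto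
  have u_support: "norm x > R \<Longrightarrow> u x = 0" for x
    by (simp add: u_def support)
  obtain B where "B \<ge> 0" and B: "\<And>x. cmod (u x) \<le> B"
    using bounded_norm_compact_support[OF u] u_support by auto
  have E_meas [measurable]: "E \<in> borel_measurable M"
    using borel_measurable_continuous_onI[OF E] by simp
  obtain I where I: "(\<integral>\<^sup>+x. ennreal ((cmod (E x))\<^sup>2) \<partial>M) = ennreal I" "I \<ge> 0"
    using E_L2 by (metis ennreal_cases infinity_ennreal_def less_le)
  obtain \<delta> where \<delta>: "0 < \<delta>" "\<delta> \<le> 1" and \<delta>_small: "\<delta>\<^sup>2 * I \<le> e / 2"
    using exists_small_square_mult_le[OF I(2), of "e / 2"] e by auto
  define tail where "tail n = (\<integral>\<^sup>+x. ennreal ((cmod (E x))\<^sup>2) * indicator (- cube (real n)) x \<partial>M)" for n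
  have "\<forall>\<^sub>F n in sequentially. tail n < ennreal (e / (4 * (B + 1)\<^sup>2)) \<and> max R 0 < real n"
    unfolding tail_def using e \<open>B \<ge> 0\<close>
    by (intro eventually_conj eventually_nn_integral_outside_cube_less[OF assms(1)] E_L2
        eventually_compose_filterlim[OF eventually_gt_at_top filterlim_real_sequentially]) auto
  then obtain n where tail: "tail n < ennreal (e / (4 * (B + 1)\<^sup>2))" and n: "max R 0 < real n"
    by (auto simp: eventually_sequentially)
  obtain t where t: "t \<in> trig_polys" "\<And>x. x \<in> cube (real n) \<Longrightarrow> cmod (u x - t x) < \<delta>"
    "\<And>x. cmod (u x - t x) \<le> B + 1"
    using trig_polys_approx_bounded[where R = R and P = "real n", OF u B u_support _ _ \<delta>] n by auto
  have h_eq: "h = (\<lambda>x. E x * u x)"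
    using E_nonzero by (simp add: u_def)
  have "cube (real n) \<in> sets borel"
    by (simp add: cube_def)
  then have "sqdist_L2 M h (\<lambda>x. E x * t x) \<le> ennreal (\<delta>\<^sup>2) * ennreal I + ennreal ((B + 1)\<^sup>2) * tail n"
    unfolding h_eq tail_def I(1)[symmetric]
    by (intro sqdist_L2_multiple_le[OF assms(1) E_meas] less_imp_le t(2,3))
  also have "\<dots> \<le> ennreal (e / 2) + ennreal (e / 4)"
  proof (rule add_mono)
    show "ennreal (\<delta>\<^sup>2) * ennreal I \<le> ennreal (e / 2)"
      using \<delta>_small I(2) by (simp add: ennreal_mult[symmetric] ennreal_leI del: ennreal_le_iff)
    have "ennreal ((B + 1)\<^sup>2) * tail n \<le> ennreal ((B + 1)\<^sup>2) * ennreal (e / (4 * (B + 1)\<^sup>2))"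
      using tail by (intro mult_left_mono) auto
    also have "\<dots> = ennreal (e / 4)"
      using \<open>B \<ge> 0\<close> e by (simp add: ennreal_mult[symmetric])
    finally show "ennreal ((B + 1)\<^sup>2) * tail n \<le> ennreal (e / 4)" .
  qed
  also have "\<dots> < ennreal e"
    using e by (simp add: ennreal_plus[symmetric] ennreal_less_iff del: ennreal_plus)
  finally show ?thesis
    using t(1) that by blast
qed

theorem trig_multiple_approx_L2:
  fixes f E :: "'a::euclidean_space \<Rightarrow> complex"
  assumes [measurable_cong]: "sets M = sets borel"
    and ac: "absolutely_continuous lborel M" and finite: "\<And>r. emeasure M (cball 0 r) < \<infinity>"
    and E: "continuous_on UNIV E" "\<And>x. E x \<noteq> 0" "(\<integral>\<^sup>+x. ennreal ((cmod (E x))\<^sup>2) \<partial>M) < \<infinity>"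
    and f [measurable]: "f \<in> borel_measurable M"
    and f_L2: "(\<integral>\<^sup>+x. ennreal ((cmod (f x))\<^sup>2) \<partial>M) < \<infinity>"
    and e: "e > 0"
  obtains t where "t \<in> trig_polys" "sqdist_L2 M f (\<lambda>x. E x * t x) < ennreal e"
proof -
  define e' where "e' = e / 10"
  have "e' > 0"
    using e by (simp add: e'_def)
  obtain R where R: "R > 0"
    and f_trunc: "sqdist_L2 M f (\<lambda>x. if cmod (f x) \<le> R \<and> norm x \<le> R then f x else 0) < ennreal e'"
    using sqdist_L2_truncation[OF assms(1) f f_L2 \<open>e' > 0\<close>] by blast
  define f' where "f' x = (if cmod (f x) \<le> R \<and> norm x \<le> R then f x else 0)" for x
  have [measurable]: "f' \<in> borel_measurable M"
    unfolding f'_def by measurable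
  obtain h where h: "continuous_on UNIV h" "\<And>x. norm x > R + 1 \<Longrightarrow> h x = 0"
    and f'_h: "sqdist_L2 M f' h < ennreal e'"
  proof (rule sqdist_L2_continuous_approx[OF assms(1) ac finite _ R _ _ \<open>e' > 0\<close>])
    show "cmod (f' x) \<le> R" "norm x > R \<Longrightarrow> f' x = 0" for x
      using R by (simp_all add: f'_def)
  qed auto
  obtain t where t: "t \<in> trig_polys" and h_t: "sqdist_L2 M h (\<lambda>x. E x * t x) < ennreal e'"
    using sqdist_L2_trig_multiple_approx[OF assms(1) h E \<open>e' > 0\<close>] by blast
  have [measurable]: "h \<in> borel_measurable M" "(\<lambda>x. E x * t x) \<in> borel_measurable M"
    using borel_measurable_continuous_onI[OF h(1)]
      borel_measurable_continuous_onI[OF continuous_on_mult[OF E(1) continuous_on_trig_poly[OF t]]]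
    by simp_all
  have "sqdist_L2 M f' (\<lambda>x. E x * t x) < ennreal (2 * e' + 2 * e')"
    by (rule sqdist_L2_triangle_less[OF _ _ _ f'_h h_t]) measurable
  then have "sqdist_L2 M f (\<lambda>x. E x * t x) < ennreal (2 * e' + 2 * (2 * e' + 2 * e'))"
    by (intro sqdist_L2_triangle_less[OF _ _ _ f_trunc[folded f'_def]]) measurable
  with t show ?thesis
    by (intro that) (simp_all add: e'_def)
qed

section \<open>The kernels\<close>

lemma exists_Mker_pairing:
  fixes br :: "'l::euclidean_space \<Rightarrow> 'l \<Rightarrow> real" and q :: "'l \<Rightarrow> 'q::euclidean_space"
  assumes br: "bilinear br"
    and MN_sum: "\<And>\<tau>. \<exists>m n. m \<in> Mker br \<and> n \<in> Nker br \<and> \<tau> = m + n"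
    and q_Mker: "\<And>\<tau>. \<tau> \<in> Mker br \<Longrightarrow> q \<tau> = 0"
    and j: "linear j" and j_sect: "\<And>\<phi>. q (j \<phi>) = \<phi>"
  shows "\<exists>m\<in>Mker br. \<forall>\<phi>. br m (j \<phi>) = k \<bullet> \<phi>"
proof -
  \<comment> \<open>T \<xi> represents [\<xi>, j -]. A vector w orthogonal to the range of T has [\<xi>, j w] = 0
    for all \<xi>, i.e. j w \<in> M, so w = q (j w) = 0.\<close>
  define T where "T \<xi> = (\<Sum>b\<in>Basis. br \<xi> (j b) *\<^sub>R b)" for \<xi>
  have T: "linear T"
    unfolding T_def
    by (intro linearI)
      (simp_all add: bilinear_ladd[OF br] bilinear_lmul[OF br] scaleR_add_left sum.distrib scaleR_sum_right)
  have T_inner: "T \<xi> \<bullet> \<phi> = br \<xi> (j \<phi>)" for \<xi> \<phi>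
  proof -
    have "linear (br \<xi>)"
      using br by (simp add: bilinear_def)
    then have "linear (\<lambda>\<phi>. br \<xi> (j \<phi>))"
      using linear_compose[OF j] by (simp add: o_def)
    note lin = linear_sum[OF this] linear_scale[OF this]
    have "br \<xi> (j \<phi>) = br \<xi> (j (\<Sum>b\<in>Basis. (\<phi> \<bullet> b) *\<^sub>R b))"
      by (simp add: euclidean_representation)
    also have "\<dots> = (\<Sum>b\<in>Basis. (\<phi> \<bullet> b) * br \<xi> (j b))"
      by (simp only: lin real_scaleR_def)
    finally show ?thesis
      by (simp add: T_def inner_sum_left) (simp add: inner_commute mult.commute)
  qed
  have "range T = UNIV"
  proof (rule ccontr)
    assume "range T \<noteq> UNIV"
    moreover have "span (range T) = range T"
      using linear_subspace_image[OF T subspace_UNIV] by simp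
    ultimately obtain w where w: "w \<noteq> 0" "\<And>x. x \<in> span (range T) \<Longrightarrow> w \<bullet> x = 0"
      using span_not_UNIV_orthogonal by metis
    have "br \<xi> (j w) = 0" for \<xi>
      using w(2)[of "T \<xi>"] by (simp add: span_base T_inner[symmetric] inner_commute)
    then have "q (j w) = 0"
      by (intro q_Mker) (simp add: Mker_def)
    with w(1) j_sect show False
      by simp
  qed
  then obtain \<xi> where "T \<xi> = k"
    by (metis UNIV_I image_iff)
  moreover obtain m n where "m \<in> Mker br" "n \<in> Nker br" "\<xi> = m + n"
    using MN_sum by blast
  ultimately have "br m (j \<phi>) = k \<bullet> \<phi>" for \<phi>
    using T_inner[of \<xi> \<phi>] by (simp add: Nker_def bilinear_ladd[OF br])
  with \<open>m \<in> Mker br\<close> show ?thesis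
    by blast
qed

lemma continuous_on_Khat:
  fixes \<theta> :: "'l::euclidean_space \<Rightarrow> 'l \<Rightarrow> real" and q :: "'l \<Rightarrow> 'q::euclidean_space"
  assumes \<theta>: "linear (\<theta> \<zeta>)" and br: "bilinear br" and J: "linear J" and j: "linear j"
  shows "continuous_on S (Khat \<theta> br J q j \<zeta>)"
proof -
  have v: "continuous_on S (\<lambda>\<phi>. j (\<phi> - q \<zeta>))"
    by (intro linear_continuous_on_compose[OF _ j] continuous_intros)
  have Jv: "continuous_on S (\<lambda>\<phi>. J (j (\<phi> - q \<zeta>)))"
    by (rule linear_continuous_on_compose[OF v J])
  show ?thesis
    unfolding Khat_def Omega_of_def g_of_def omega_of_def
    by (intro continuous_intros linear_continuous_on_compose[OF v \<theta>]
        bilinear_continuous_on_compose[OF v Jv br] bilinear_continuous_on_compose[OF Jv v br]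
        bilinear_continuous_on_compose[OF v v br])
qed

lemma norm_Khat_squared:
  "(cmod (Khat \<theta> br J q j \<zeta> \<phi>))\<^sup>2 = exp (- g_of br J (j (\<phi> - q \<zeta>)) (j (\<phi> - q \<zeta>)))"
proof -
  have "cmod (Khat \<theta> br J q j \<zeta> \<phi>) = exp (- g_of br J (j (\<phi> - q \<zeta>)) (j (\<phi> - q \<zeta>)) / 2)"
    unfolding Khat_def norm_exp_eq_Re by (simp add: Omega_of_def)
  then show ?thesis
    by (simp add: power2_eq_square exp_add[symmetric])
qed

lemma Khat_nonzero: "Khat \<theta> br J q j \<zeta> \<phi> \<noteq> 0"
  by (simp add: Khat_def)

lemma Khat_translate_Mker:
  fixes \<theta> :: "'l::euclidean_space \<Rightarrow> 'l \<Rightarrow> real" and q :: "'l \<Rightarrow> 'q::euclidean_space"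
  assumes br: "bilinear br"
    and theta_shift: "\<And>\<eta> \<xi> \<tau>. \<theta> (\<eta> + \<xi>) \<tau> = \<theta> \<eta> \<tau> + br \<xi> \<tau>"
    and q: "linear q" and j: "linear j" and "q m = 0"
  shows "Khat \<theta> br J q j (\<zeta> + m) \<phi> =
    exp (\<i> * of_real (br m (j \<phi>) - br m (j (q \<zeta>)))) * Khat \<theta> br J q j \<zeta> \<phi>"
proof -
  have q_shift: "q (\<zeta> + m) = q \<zeta>"
    using \<open>q m = 0\<close> linear_add[OF q] by simp
  have br_shift: "br m (j (\<phi> - q \<zeta>)) = br m (j \<phi>) - br m (j (q \<zeta>))"
    by (simp add: linear_diff[OF j] bilinear_rsub[OF br])
  show ?thesis
    unfolding Khat_def theta_shift q_shift br_shift by (simp add: exp_add[symmetric] algebra_simps)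
qed

lemma Khat_times_character_in_span:
  fixes \<theta> :: "'l::euclidean_space \<Rightarrow> 'l \<Rightarrow> real" and q :: "'l \<Rightarrow> 'q::euclidean_space"
  assumes br: "bilinear br"
    and theta_shift: "\<And>\<eta> \<xi> \<tau>. \<theta> (\<eta> + \<xi>) \<tau> = \<theta> \<eta> \<tau> + br \<xi> \<tau>"
    and MN_sum: "\<And>\<tau>. \<exists>m n. m \<in> Mker br \<and> n \<in> Nker br \<and> \<tau> = m + n"
    and q: "linear q" and q_Mker: "\<And>\<tau>. \<tau> \<in> Mker br \<Longrightarrow> q \<tau> = 0"
    and j: "linear j" and j_sect: "\<And>\<phi>. q (j \<phi>) = \<phi>"
  shows "(\<lambda>\<phi>. Khat \<theta> br J q j \<zeta> \<phi> * character k \<phi>) \<in> fun_span (Khat \<theta> br J q j)"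
proof -
  obtain m where m: "m \<in> Mker br" "\<And>\<phi>. br m (j \<phi>) = k \<bullet> \<phi>"
    using exists_Mker_pairing[OF br MN_sum q_Mker j j_sect] by blast
  define c where "c = exp (\<i> * of_real (br m (j (q \<zeta>))))"
  have "Khat \<theta> br J q j \<zeta> \<phi> * character k \<phi> = c * Khat \<theta> br J q j (\<zeta> + m) \<phi>" for \<phi>
    using Khat_translate_Mker[where \<theta> = \<theta>, OF br theta_shift q j q_Mker[OF m(1)], of J \<zeta> \<phi>]
    by (simp add: c_def character_def m(2) right_diff_distrib exp_diff)
  then show ?thesis
    using fun_span_base[of c "Khat \<theta> br J q j" "\<zeta> + m"] by simp
qed

lemma density_lborel_const:
  fixes c :: real
  shows "sets (density lborel (\<lambda>_::'a::euclidean_space. ennreal c)) = sets borel"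
    and "absolutely_continuous lborel (density lborel (\<lambda>_::'a. ennreal c))"
    and "emeasure (density lborel (\<lambda>_::'a. ennreal c)) (cball 0 r) < \<infinity>"
proof -
  show "sets (density lborel (\<lambda>_::'a. ennreal c)) = sets borel"
    by simp
  show "absolutely_continuous lborel (density lborel (\<lambda>_::'a. ennreal c))"
    by (simp add: absolutely_continuousI_density)
  have "emeasure (density lborel (\<lambda>_::'a. ennreal c)) (cball 0 r)
      = ennreal c * emeasure lborel (cball (0::'a) r)"
    by (simp add: emeasure_density nn_integral_cmult_indicator mult.commute)
  then show "emeasure (density lborel (\<lambda>_::'a. ennreal c)) (cball 0 r) < \<infinity>"
    using emeasure_bounded_finite[of "cball (0::'a) r"] by (simp add: ennreal_mult_less_top)
qed

lemma Khat_square_integrable: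
  assumes "(\<integral>\<phi>. exp (- g_of br J (j (\<phi> - q \<eta>)) (j (\<phi> - q \<eta>))) \<partial>M) = 1"
  shows "(\<integral>\<^sup>+\<phi>. ennreal ((cmod (Khat \<theta> br J q j \<eta> \<phi>))\<^sup>2) \<partial>M) < \<infinity>"
proof -
  have "integrable M (\<lambda>\<phi>. (cmod (Khat \<theta> br J q j \<eta> \<phi>))\<^sup>2)"
    using assms not_integrable_integral_eq by (fastforce simp: norm_Khat_squared)
  then show ?thesis
    by (simp add: integrable_iff_bounded)
qed

theorem proposition4p2:
  fixes \<theta> :: "'l::euclidean_space \<Rightarrow> 'l \<Rightarrow> real"
    and br :: "'l \<Rightarrow> 'l \<Rightarrow> real"
    and J :: "'l \<Rightarrow> 'l"
    and q :: "'l \<Rightarrow> 'q::euclidean_space"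
    and j :: "'q \<Rightarrow> 'l"
    and \<kappa> :: real
    and \<mu>C :: "'q measure"
  assumes theta_lin: "\<And>\<eta>. linear (\<theta> \<eta>)"
    and br_bilin: "bilinear br"
    and theta_shift: "\<And>\<eta> \<xi> \<tau>. \<theta> (\<eta> + \<xi>) \<tau> = \<theta> \<eta> \<tau> + br \<xi> \<tau>"
    and omega_nondeg: "\<And>\<xi>. (\<forall>\<xi>'. omega_of br \<xi> \<xi>' = 0) \<Longrightarrow> \<xi> = 0"
    and MN_inter: "Mker br \<inter> Nker br = {0}"
    and MN_sum: "\<And>\<tau>. \<exists>m n. m \<in> Mker br \<and> n \<in> Nker br \<and> \<tau> = m + n"
    and q_lin: "linear q"
    and q_surj: "surj q"
    and q_ker: "\<And>\<tau>. q \<tau> = 0 \<longleftrightarrow> \<tau> \<in> Mker br"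
    and theta_M: "\<And>\<eta> \<tau>. \<tau> \<in> Mker br \<Longrightarrow> \<theta> \<eta> \<tau> = 0"
    and J_lin: "linear J"
    and J_sq: "\<And>\<xi>. J (J \<xi>) = - \<xi>"
    and J_omega: "\<And>\<xi> \<xi>'. omega_of br (J \<xi>) (J \<xi>') = omega_of br \<xi> \<xi>'"
    and g_pos: "\<And>\<tau>. \<tau> \<noteq> 0 \<Longrightarrow> g_of br J \<tau> \<tau> > 0"
    and j_lin: "linear j"
    and j_sect: "\<And>\<phi>. q (j \<phi>) = \<phi>"
    and j_JM: "\<And>\<phi>. j \<phi> \<in> J ` Mker br"
    and kappa_pos: "\<kappa> > 0"
    and muC_def: "\<mu>C = density lborel (\<lambda>_. ennreal \<kappa>)"
    and muC_norm: "\<exists>\<eta>. (\<integral>\<phi>. exp (- g_of br J (j (\<phi> - q \<eta>)) (j (\<phi> - q \<eta>))) \<partial>\<mu>C) = 1"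
  shows "\<forall>f :: 'q \<Rightarrow> complex. f \<in> borel_measurable \<mu>C
           \<and> (\<integral>\<^sup>+ \<phi>. ennreal ((cmod (f \<phi>))\<^sup>2) \<partial>\<mu>C) < \<infinity> \<longrightarrow>
           (\<forall>\<epsilon>>0. \<exists>Z :: 'l set. \<exists>a :: 'l \<Rightarrow> complex. finite Z \<and>
              (\<integral>\<^sup>+ \<phi>. ennreal ((cmod (f \<phi> - (\<Sum>\<zeta>\<in>Z. a \<zeta> * Khat \<theta> br J q j \<zeta> \<phi>)))\<^sup>2) \<partial>\<mu>C)
                < ennreal \<epsilon>)"
proof (intro allI impI)
  fix f :: "'q \<Rightarrow> complex" and \<epsilon> :: real
  assume f: "f \<in> borel_measurable \<mu>C \<and> (\<integral>\<^sup>+ \<phi>. ennreal ((cmod (f \<phi>))\<^sup>2) \<partial>\<mu>C) < \<infinity>" and "\<epsilon> > 0"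
  obtain \<eta> where \<eta>: "(\<integral>\<phi>. exp (- g_of br J (j (\<phi> - q \<eta>)) (j (\<phi> - q \<eta>))) \<partial>\<mu>C) = 1"
    using muC_norm by blast
  have \<mu>C: "sets \<mu>C = sets borel" "absolutely_continuous lborel \<mu>C" "\<And>r. emeasure \<mu>C (cball 0 r) < \<infinity>"
    unfolding muC_def by (rule density_lborel_const)+
  obtain t where t: "t \<in> trig_polys"
    and approx: "sqdist_L2 \<mu>C f (\<lambda>\<phi>. Khat \<theta> br J q j \<eta> \<phi> * t \<phi>) < ennreal \<epsilon>"
    using trig_multiple_approx_L2[OF \<mu>C continuous_on_Khat[where \<theta> = \<theta>, OF theta_lin br_bilin J_lin j_lin]
        Khat_nonzero Khat_square_integrable[where br = br and J = J and j = j and q = q, OF \<eta>]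
        _ _ \<open>\<epsilon> > 0\<close>] f
    by blast
  have "(\<lambda>\<phi>. Khat \<theta> br J q j \<eta> \<phi> * t \<phi>) \<in> fun_span (Khat \<theta> br J q j)"
    by (rule fun_span_multiplier[OF Khat_times_character_in_span t])
      (use br_bilin theta_shift MN_sum q_lin q_ker j_lin j_sect in auto)
  then obtain Z a where "finite Z"
    "\<And>\<phi>. Khat \<theta> br J q j \<eta> \<phi> * t \<phi> = (\<Sum>\<zeta>\<in>Z. a \<zeta> * Khat \<theta> br J q j \<zeta> \<phi>)"
    by (auto elim: fun_spanE)
  with approx show "\<exists>Z a. finite Z \<and>
      (\<integral>\<^sup>+\<phi>. ennreal ((cmod (f \<phi> - (\<Sum>\<zeta>\<in>Z. a \<zeta> * Khat \<theta> br J q j \<zeta> \<phi>)))\<^sup>2) \<partial>\<mu>C) < ennreal \<epsilon>"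
    unfolding sqdist_L2_def by auto
qed

end
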